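(* Let $|\Psi\rangle$ be a normalized state of $N$ qubits given by an open matrix-product state (MPS) in canonical Vidal form $\{\Gamma^{[i]},\Lambda^{[j]}\}$ (as described in the context). Fix a positive integer $\chi'$, and let $|\tilde{\Psi}_{T}\rangle$ be the parallel-compressed MPS obtained by inserting the projector $P_i$ on every bond $i=1,\dots,N-1$. Let $\epsilon(\chi')=\sum_{i=1}^{N-1}\epsilon_i(\chi')$ with $\epsilon_i(\chi')=\sum_{\alpha>\chi'}(\Lambda^{[i]}_{\alpha\alpha})^2$. Then the norm $n=\big\||\tilde{\Psi}_{T}\rangle\big\|$ satisfies $$1-\sqrt{2\epsilon(\chi')}\;\le\; n\;\le\;1.$$
   Context: An open MPS in Vidal form on $N$ sites with local dimension $d$ (here $d=2$) consists of rank-3 tensors $\Gamma^{[i]\sigma_i}$ ($i=1,\dots,N$, $\sigma_i\in\{0,\dots,d-1\}$), each a $\chi_{i-1}\times\chi_i$ matrix for fixed $\sigma_i$, and real diagonal matrices $\Lambda^{[i]}$ of size $\chi_i\times\chi_i$ ($i=0,\dots,N$) with nonnegative diagonal entries in descending order, where $\chi_0=\chi_N=1$ and $\Lambda^{[0]}=\Lambda^{[N]}=(1)$. It represents $|\Psi\rangle=\sum_{\sigma_1,\dots,\sigma_N}\mathrm{Tr}(\Lambda^{[0]}\Gamma^{[1]\sigma_1}\Lambda^{[1]}\Gamma^{[2]\sigma_2}\cdots\Lambda^{[N-1]}\Gamma^{[N]\sigma_N}\Lambda^{[N]})\,|\sigma_1\cdots\sigma_N\rangle$. It is in canonical form if for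 every $i=1,\dots,N$, with $A^{[i]\sigma_i}=\Lambda^{[i-1]}\Gamma^{[i]\sigma_i}$ and $B^{[i]\sigma_i}=\Gamma^{[i]\sigma_i}\Lambda^{[i]}$, one has $\sum_{\sigma_i}(A^{[i]\sigma_i})^\dagger A^{[i]\sigma_i}=I_{\chi_i}$ and $\sum_{\sigma_i}B^{[i]\sigma_i}(B^{[i]\sigma_i})^\dagger=I_{\chi_{i-1}}$. For a normalized canonical MPS, $\sum_\alpha(\Lambda^{[i]}_{\alpha\alpha})^2=1$ for each $i$. For each bond $i\in\{1,\dots,N-1\}$, $P_i=\sum_{\alpha=1}^{\min(\chi',\chi_i)}|\alpha\rangle\langle\alpha|$ is the projector onto the first $\chi'$ standard basis vectors of the $\chi_i$-dimensional bond space (those corresponding to the largest diagonal entries of $\Lambda^{[i]}$). The parallel-compressed state is $|\tilde{\Psi}_{T}\rangle=\sum_{\sigma}\mathrm{Tr}(\Lambda^{[0]}\Gamma^{[1]\sigma_1}P_1\Lambda^{[1]}\Gamma^{[2]\sigma_2}P_2\Lambda^{[2]}\cdots P_{N-1}\Lambda^{[N-1]}\Gamma^{[N]\sigma_N}\Lambda^{[N]})|\sigma_1\cdots\sigma_N\rangle$ (not renormalized). Sums $\sum_{\alpha>\chi'}$ over an empty range are zero. *)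

theory Defs
  imports Complex_Main "Jordan_Normal_Form.Matrix"
begin

definition dag :: "complex mat \<Rightarrow> complex mat" where
  "dag A = mat (dim_col A) (dim_row A) (\<lambda>(i,j). cnj (A $$ (j,i)))"

definition mtrace :: "complex mat \<Rightarrow> complex" where
  "mtrace A = (\<Sum>i<dim_row A. A $$ (i,i))"

definition lam_mat :: "(nat \<Rightarrow> nat) \<Rightarrow> (nat \<Rightarrow> nat \<Rightarrow> real) \<Rightarrow> nat \<Rightarrow> complex mat" where
  "lam_mat chi Lam i = mat (chi i) (chi i) (\<lambda>(a,b). if a = b then complex_of_real (Lam i a) else 0)"

definition proj_mat :: "(nat \<Rightarrow> nat) \<Rightarrow> nat \<Rightarrow> nat \<Rightarrow> complex mat" where
  "proj_mat chi chi' i = mat (chi i) (chi i) (\<lambda>(a,b). if a = b \<and> a < chi' then 1 else 0)"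

definition configs :: "nat \<Rightarrow> (nat \<Rightarrow> nat) set" where
  "configs N = PiE {1..N} (\<lambda>_. {..<2})"

definition vidal_mps ::
  "nat \<Rightarrow> (nat \<Rightarrow> nat) \<Rightarrow> (nat \<Rightarrow> nat \<Rightarrow> complex mat) \<Rightarrow> (nat \<Rightarrow> nat \<Rightarrow> real) \<Rightarrow> bool" where
  "vidal_mps N chi Gamma Lam \<longleftrightarrow>
     chi 0 = 1 \<and> chi N = 1 \<and> (\<forall>i\<le>N. chi i \<ge> 1) \<and>
     Lam 0 0 = 1 \<and> Lam N 0 = 1 \<and>
     (\<forall>i\<in>{1..N}. \<forall>s<2. Gamma i s \<in> carrier_mat (chi (i - 1)) (chi i)) \<and>
     (\<forall>i\<le>N. \<forall>a<chi i. Lam i a \<ge> 0) \<and>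
     (\<forall>i\<le>N. \<forall>a b. a \<le> b \<longrightarrow> b < chi i \<longrightarrow> Lam i b \<le> Lam i a)"

definition canonical ::
  "nat \<Rightarrow> (nat \<Rightarrow> nat) \<Rightarrow> (nat \<Rightarrow> nat \<Rightarrow> complex mat) \<Rightarrow> (nat \<Rightarrow> nat \<Rightarrow> real) \<Rightarrow> bool" where
  "canonical N chi Gamma Lam \<longleftrightarrow>
     (\<forall>i\<in>{1..N}.
        (let A = (\<lambda>s. lam_mat chi Lam (i - 1) * Gamma i s);
             B = (\<lambda>s. Gamma i s * lam_mat chi Lam i)
         in dag (A 0) * A 0 + dag (A 1) * A 1 = 1\<^sub>m (chi i) \<and>
            B 0 * dag (B 0) + B 1 * dag (B 1) = 1\<^sub>m (chi (i - 1))))"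

text \<open>Amplitude of the MPS:
  Tr(Lambda0 Gamma1 Lambda1 Gamma2 ... Lambda_(N-1) Gamma_N Lambda_N).\<close>
definition mps_amp ::
  "nat \<Rightarrow> (nat \<Rightarrow> nat) \<Rightarrow> (nat \<Rightarrow> nat \<Rightarrow> complex mat) \<Rightarrow> (nat \<Rightarrow> nat \<Rightarrow> real)
   \<Rightarrow> (nat \<Rightarrow> nat) \<Rightarrow> complex" where
  "mps_amp N chi Gamma Lam \<sigma> =
     mtrace (foldl (*) (1\<^sub>m 1) (map (\<lambda>i. lam_mat chi Lam (i - 1) * Gamma i (\<sigma> i)) [1..<N+1])
             * lam_mat chi Lam N)"

text \<open>Amplitude of the parallel-compressed MPS:
  Tr(Lambda0 Gamma1 P1 Lambda1 Gamma2 P2 Lambda2 ... P_(N-1) Lambda_(N-1) Gamma_N Lambda_N).\<close>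
definition comp_amp ::
  "nat \<Rightarrow> (nat \<Rightarrow> nat) \<Rightarrow> (nat \<Rightarrow> nat \<Rightarrow> complex mat) \<Rightarrow> (nat \<Rightarrow> nat \<Rightarrow> real) \<Rightarrow> nat
   \<Rightarrow> (nat \<Rightarrow> nat) \<Rightarrow> complex" where
  "comp_amp N chi Gamma Lam chi' \<sigma> =
     mtrace (foldl (*) (1\<^sub>m 1)
               (map (\<lambda>i. (if i = 1 then 1\<^sub>m (chi 0) else proj_mat chi chi' (i - 1))
                          * lam_mat chi Lam (i - 1) * Gamma i (\<sigma> i)) [1..<N+1])
             * lam_mat chi Lam N)"

definition state_norm :: "nat \<Rightarrow> ((nat \<Rightarrow> nat) \<Rightarrow> complex) \<Rightarrow> real" where
  "state_norm N psi = sqrt (\<Sum>\<sigma>\<in>configs N. (cmod (psi \<sigma>))\<^sup>2)"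

text \<open>Truncation error on bond i: sum of squared discarded Schmidt values (0-based: a \<ge> chi').\<close>
definition eps_bond :: "(nat \<Rightarrow> nat) \<Rightarrow> (nat \<Rightarrow> nat \<Rightarrow> real) \<Rightarrow> nat \<Rightarrow> nat \<Rightarrow> real" where
  "eps_bond chi Lam chi' i = (\<Sum>a\<in>{chi'..<chi i}. (Lam i a)\<^sup>2)"

definition eps_total :: "nat \<Rightarrow> (nat \<Rightarrow> nat) \<Rightarrow> (nat \<Rightarrow> nat \<Rightarrow> real) \<Rightarrow> nat \<Rightarrow> real" where
  "eps_total N chi Lam chi' = (\<Sum>i\<in>{1..<N}. eps_bond chi Lam chi' i)"

end

theory Submission
  imports Defs
begin

(*
  Let \<psi>\<^sub>j be the state in which only the bonds j, ..., N-1 are truncated (bond weights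
  Lam_cut chi' j), so that \<psi>\<^sub>1 is the parallel-compressed state and \<psi>\<^sub>N the original one.
  Squared norms are computed by contracting from the left: the Gram matrix of the partial
  amplitudes at bond k+1 is the image of the one at bond k under the transfer map
  X \<mapsto> \<Sum>\<^sub>s (D \<Gamma>\<^sup>s)\<^sup>\<dagger> X (D \<Gamma>\<^sup>s), D the diagonal of bond weights. Left canonicity makes the Gram
  matrix of an untruncated prefix the identity; right canonicity makes the transfer map carry
  the \<Lambda>\<^sup>2-weighted trace at bond k+1 to the D\<^sup>2-weighted trace at bond k. As truncation only lowers
  weights, contracting a positive kernel X from bond k to the right end gives at most
  \<Sum>\<^sub>a \<Lambda>\<^sub>a\<^sup>2 X\<^sub>a\<^sub>a. Hence \<parallel>\<psi>\<^sub>j\<parallel>\<^sup>2 \<le> 1; and since \<psi>\<^sub>j\<^sub>+\<^sub>1 and \<psi>\<^sub>j differ only in the weights at bond j,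
  where the Gram matrix is the identity, \<parallel>\<psi>\<^sub>j\<^sub>+\<^sub>1\<parallel>\<^sup>2 - \<parallel>\<psi>\<^sub>j\<parallel>\<^sup>2 is the contraction of the
  discarded part of that identity, which is at most \<epsilon>\<^sub>j. Telescoping gives 1 - \<epsilon> \<le> n\<^sup>2 \<le> 1,
  and n \<ge> n\<^sup>2 \<ge> 1 - \<epsilon> \<ge> 1 - \<surd>(2\<epsilon>) whenever the right-hand side is positive.
*)

lemma index_mult_mat_sum:
  assumes "A \<in> carrier_mat n m" "B \<in> carrier_mat m p" "i < n" "j < p"
  shows "(A * B) $$ (i,j) = (\<Sum>k<m. A $$ (i,k) * B $$ (k,j))"
  using assms by (simp add: index_mult_mat scalar_prod_def atLeast0LessThan)

lemma index_diag_mult_mat: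
  assumes "D \<in> carrier_mat n n"
    and "\<And>a a'. a < n \<Longrightarrow> a' < n \<Longrightarrow> D $$ (a,a') = (if a = a' then f a else 0)"
    and "G \<in> carrier_mat n m" "a < n" "b < m"
  shows "(D * G) $$ (a,b) = f a * G $$ (a,b)"
proof -
  have "(D * G) $$ (a,b) = (\<Sum>k<n. D $$ (a,k) * G $$ (k,b))"
    using assms by (intro index_mult_mat_sum) auto
  also have "\<dots> = (\<Sum>k<n. if k = a then f a * G $$ (a,b) else 0)"
    by (rule sum.cong[OF refl]) (use assms in auto)
  finally show ?thesis using assms by simp
qed

lemma index_mult_diag_mat:
  assumes "D \<in> carrier_mat m m"
    and "\<And>b b'. b < m \<Longrightarrow> b' < m \<Longrightarrow> D $$ (b,b') = (if b = b' then f b else 0)"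
    and "G \<in> carrier_mat n m" "a < n" "b < m"
  shows "(G * D) $$ (a,b) = G $$ (a,b) * f b"
proof -
  have "(G * D) $$ (a,b) = (\<Sum>k<m. G $$ (a,k) * D $$ (k,b))"
    using assms by (intro index_mult_mat_sum) auto
  also have "\<dots> = (\<Sum>k<m. if k = b then G $$ (a,b) * f b else 0)"
    by (rule sum.cong[OF refl]) (use assms in auto)
  finally show ?thesis using assms by simp
qed

lemma dag_carrier: "A \<in> carrier_mat n m \<Longrightarrow> dag A \<in> carrier_mat m n"
  unfolding dag_def by simp

lemma index_dag_mult_mat:
  assumes "A \<in> carrier_mat n m" "b < m" "d < m"
  shows "(dag A * A) $$ (b,d) = (\<Sum>a<n. cnj (A $$ (a,b)) * A $$ (a,d))"
  using assms by (subst index_mult_mat_sum[OF dag_carrier[OF assms(1)] assms(1)]) (auto simp: dag_def)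

lemma index_mult_dag_mat:
  assumes "A \<in> carrier_mat n m" "a < n" "c < n"
  shows "(A * dag A) $$ (a,c) = (\<Sum>b<m. A $$ (a,b) * cnj (A $$ (c,b)))"
  using assms by (subst index_mult_mat_sum[OF assms(1) dag_carrier[OF assms(1)]]) (auto simp: dag_def)

lemma mtrace_mult_1x1:
  assumes "M \<in> carrier_mat 1 1" "L \<in> carrier_mat 1 1"
  shows "mtrace (M * L) = M $$ (0,0) * L $$ (0,0)"
  using assms index_mult_mat_sum[OF assms] by (simp add: mtrace_def)

lemma lam_mat_carrier: "lam_mat chi Lam i \<in> carrier_mat (chi i) (chi i)"
  unfolding lam_mat_def by simp

lemma index_lam_mat:
  "a < chi i \<Longrightarrow> a' < chi i \<Longrightarrow>
    lam_mat chi Lam i $$ (a,a') = (if a = a' then complex_of_real (Lam i a) else 0)"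
  unfolding lam_mat_def by simp

lemma proj_mat_carrier: "proj_mat chi chi' i \<in> carrier_mat (chi i) (chi i)"
  unfolding proj_mat_def by simp

lemma index_proj_mat:
  "a < chi i \<Longrightarrow> a' < chi i \<Longrightarrow>
    proj_mat chi chi' i $$ (a,a') = (if a = a' then (if a < chi' then 1 else 0) else 0)"
  unfolding proj_mat_def by simp

lemma sum_lessThan_2: "(\<Sum>s<2. f s) = f 0 + f (1::nat)"
  by (simp add: eval_nat_numeral)

lemma configs_0: "configs 0 = {\<lambda>_. undefined}"
  unfolding configs_def by simp

lemma configs_less_2: "\<sigma> \<in> configs N \<Longrightarrow> i \<in> {1..N} \<Longrightarrow> \<sigma> i < 2"
  unfolding configs_def by (auto simp: PiE_iff)

lemma sum_configs_Suc:
  "(\<Sum>\<sigma>\<in>configs (Suc k). f \<sigma>) = (\<Sum>s<2. \<Sum>\<sigma>\<in>configs k. f (\<sigma>(Suc k := s)))"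
proof -
  have split_last: "{1..Suc k} = insert (Suc k) {1..k}" by auto
  have fresh: "Suc k \<notin> {1..k}" by auto
  have "configs (Suc k) = (\<lambda>(s, \<sigma>). \<sigma>(Suc k := s)) ` ({..<2::nat} \<times> configs k)"
    unfolding configs_def split_last by (simp add: PiE_insert_eq)
  then have "(\<Sum>\<sigma>\<in>configs (Suc k). f \<sigma>) = (\<Sum>(s, \<sigma>)\<in>{..<2::nat} \<times> configs k. f (\<sigma>(Suc k := s)))"
    using sum.reindex[OF inj_combinator[OF fresh, of "\<lambda>_. {..<2::nat}"], of f]
    by (simp add: configs_def o_def case_prod_unfold)
  then show ?thesis by (simp add: sum.cartesian_product case_prod_unfold)
qed

definition psd :: "nat \<Rightarrow> (nat \<Rightarrow> nat \<Rightarrow> complex) \<Rightarrow> bool" where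
  "psd n X \<longleftrightarrow> (\<forall>v. 0 \<le> Re (\<Sum>a<n. \<Sum>c<n. cnj (v a) * X a c * v c))"

lemma psd_diag_nonneg:
  assumes "psd n X" "a < n"
  shows "0 \<le> Re (X a a)"
proof -
  define v :: "nat \<Rightarrow> complex" where "v x = (if x = a then 1 else 0)" for x
  have "(\<Sum>c<n. cnj (v a') * X a' c * v c) = (if a' = a then X a' a else 0)" for a'
  proof -
    have "(\<Sum>c<n. cnj (v a') * X a' c * v c) = (\<Sum>c<n. if c = a then cnj (v a') * X a' a else 0)"
      by (intro sum.cong) (simp_all add: v_def)
    then show ?thesis using assms(2) by (simp add: v_def)
  qed
  then have "(\<Sum>a'<n. \<Sum>c<n. cnj (v a') * X a' c * v c) = X a a"
    using assms(2) by simp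
  moreover have "0 \<le> Re (\<Sum>a'<n. \<Sum>c<n. cnj (v a') * X a' c * v c)"
    using assms(1) unfolding psd_def by (rule spec)
  ultimately show ?thesis by simp
qed

lemma psd_id: "psd n (\<lambda>a c. if a = c then 1 else 0)"
  unfolding psd_def
proof
  fix v :: "nat \<Rightarrow> complex"
  have "(\<Sum>c<n. cnj (v a) * (if a = c then 1 else 0) * v c) = cnj (v a) * v a" if "a < n" for a
  proof -
    have "(\<Sum>c<n. cnj (v a) * (if a = c then 1 else 0) * v c) = (\<Sum>c<n. if c = a then cnj (v a) * v a else 0)"
      by (intro sum.cong) auto
    then show ?thesis using that by simp
  qed
  then have "(\<Sum>a<n. \<Sum>c<n. cnj (v a) * (if a = c then 1 else 0) * v c) = (\<Sum>a<n. cnj (v a) * v a)"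
    by simp
  moreover have "0 \<le> Re (\<Sum>a<n. cnj (v a) * v a)"
    unfolding Re_sum by (intro sum_nonneg) (simp add: mult.commute[of "cnj _"] complex_mult_cnj)
  ultimately show "0 \<le> Re (\<Sum>a<n. \<Sum>c<n. cnj (v a) * (if a = c then 1 else 0) * v c)"
    by simp
qed

lemma sqrt_bounds_of_square_bounds:
  fixes x e :: real
  assumes "1 - e \<le> x" "0 \<le> x" "x \<le> 1"
  shows "1 - sqrt (2 * e) \<le> sqrt x \<and> sqrt x \<le> 1"
proof
  show "sqrt x \<le> 1" using assms by simp
  have "x \<le> sqrt x"
    using assms by (intro real_le_rsqrt) (simp add: power2_eq_square mult_left_le)
  show "1 - sqrt (2 * e) \<le> sqrt x"
  proof (cases "e \<le> 2")
    case True
    then have "e \<le> sqrt (2 * e)"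
      using assms by (intro real_le_rsqrt) (simp add: power2_eq_square mult_right_mono)
    with \<open>x \<le> sqrt x\<close> assms show ?thesis by linarith
  next
    case False
    then have "1 \<le> sqrt (2 * e)" by simp
    then show ?thesis using real_sqrt_ge_zero[OF assms(2)] by linarith
  qed
qed

lemma vidal_mps_Gamma_carrier:
  "vidal_mps N chi Gamma Lam \<Longrightarrow> k < N \<Longrightarrow> s < 2 \<Longrightarrow>
    Gamma (Suc k) s \<in> carrier_mat (chi k) (chi (Suc k))"
  unfolding vidal_mps_def by (metis Suc_leI atLeastAtMost_iff diff_Suc_1 le_add1 plus_1_eq_Suc)

lemma canonical_left_isometry:
  assumes vidal: "vidal_mps N chi Gamma Lam" and can: "canonical N chi Gamma Lam"
    and k: "k < N" and b: "b < chi (Suc k)" and d: "d < chi (Suc k)"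
  shows "(\<Sum>s<2. \<Sum>a<chi k. complex_of_real ((Lam k a)\<^sup>2) *
            (cnj (Gamma (Suc k) s $$ (a,b)) * Gamma (Suc k) s $$ (a,d))) = (if b = d then 1 else 0)"
proof -
  define A where "A s = lam_mat chi Lam k * Gamma (Suc k) s" for s
  have Gamma: "Gamma (Suc k) s \<in> carrier_mat (chi k) (chi (Suc k))" if "s < 2" for s
    using vidal_mps_Gamma_carrier[OF vidal k that] .
  have A_carrier: "A s \<in> carrier_mat (chi k) (chi (Suc k))" if "s < 2" for s
    unfolding A_def using Gamma[OF that] lam_mat_carrier by (metis mult_carrier_mat)
  have A_entry: "A s $$ (a,b') = complex_of_real (Lam k a) * Gamma (Suc k) s $$ (a,b')"
    if "s < 2" "a < chi k" "b' < chi (Suc k)" for s a b'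
    unfolding A_def using lam_mat_carrier index_lam_mat Gamma that
    by (intro index_diag_mult_mat[where f = "\<lambda>a. complex_of_real (Lam k a)"]) auto
  have "Suc k \<in> {1..N}" using k by simp
  then have unit: "dag (A 0) * A 0 + dag (A 1) * A 1 = 1\<^sub>m (chi (Suc k))"
    using can unfolding canonical_def A_def Let_def by fastforce
  have "(if b = d then 1 else 0) = (dag (A 0) * A 0 + dag (A 1) * A 1) $$ (b,d)"
    unfolding unit using b d by simp
  also have "\<dots> = (dag (A 0) * A 0) $$ (b,d) + (dag (A 1) * A 1) $$ (b,d)"
    using A_carrier[of 1] dag_carrier[OF A_carrier[of 1]] b d by (simp add: index_add_mat)
  also have "\<dots> = (\<Sum>s<2. (dag (A s) * A s) $$ (b,d))"
    by (simp add: sum_lessThan_2)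
  also have "\<dots> = (\<Sum>s<2. \<Sum>a<chi k. cnj (A s $$ (a,b)) * A s $$ (a,d))"
    using A_carrier b d by (intro sum.cong refl index_dag_mult_mat) auto
  also have "\<dots> = (\<Sum>s<2. \<Sum>a<chi k. complex_of_real ((Lam k a)\<^sup>2) *
                     (cnj (Gamma (Suc k) s $$ (a,b)) * Gamma (Suc k) s $$ (a,d)))"
    using b d by (intro sum.cong refl) (simp add: A_entry power2_eq_square)
  finally show ?thesis by simp
qed

lemma canonical_right_isometry:
  assumes vidal: "vidal_mps N chi Gamma Lam" and can: "canonical N chi Gamma Lam"
    and k: "k < N" and a: "a < chi k" and e: "e < chi k"
  shows "(\<Sum>s<2. \<Sum>b<chi (Suc k). complex_of_real ((Lam (Suc k) b)\<^sup>2) *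
            (Gamma (Suc k) s $$ (a,b) * cnj (Gamma (Suc k) s $$ (e,b)))) = (if a = e then 1 else 0)"
proof -
  define B where "B s = Gamma (Suc k) s * lam_mat chi Lam (Suc k)" for s
  have Gamma: "Gamma (Suc k) s \<in> carrier_mat (chi k) (chi (Suc k))" if "s < 2" for s
    using vidal_mps_Gamma_carrier[OF vidal k that] .
  have B_carrier: "B s \<in> carrier_mat (chi k) (chi (Suc k))" if "s < 2" for s
    unfolding B_def using Gamma[OF that] lam_mat_carrier by (metis mult_carrier_mat)
  have B_entry: "B s $$ (a',b) = Gamma (Suc k) s $$ (a',b) * complex_of_real (Lam (Suc k) b)"
    if "s < 2" "a' < chi k" "b < chi (Suc k)" for s a' b
    unfolding B_def using lam_mat_carrier index_lam_mat Gamma that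
    by (intro index_mult_diag_mat[where f = "\<lambda>b. complex_of_real (Lam (Suc k) b)"]) auto
  have "Suc k \<in> {1..N}" using k by simp
  then have unit: "B 0 * dag (B 0) + B 1 * dag (B 1) = 1\<^sub>m (chi k)"
    using can unfolding canonical_def B_def Let_def by fastforce
  have "(if a = e then 1 else 0) = (B 0 * dag (B 0) + B 1 * dag (B 1)) $$ (a,e)"
    unfolding unit using a e by simp
  also have "\<dots> = (B 0 * dag (B 0)) $$ (a,e) + (B 1 * dag (B 1)) $$ (a,e)"
    using B_carrier[of 1] dag_carrier[OF B_carrier[of 1]] a e by (simp add: index_add_mat)
  also have "\<dots> = (\<Sum>s<2. (B s * dag (B s)) $$ (a,e))"
    by (simp add: sum_lessThan_2)
  also have "\<dots> = (\<Sum>s<2. \<Sum>b<chi (Suc k). B s $$ (a,b) * cnj (B s $$ (e,b)))"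
    using B_carrier a e by (intro sum.cong refl index_mult_dag_mat) auto
  also have "\<dots> = (\<Sum>s<2. \<Sum>b<chi (Suc k). complex_of_real ((Lam (Suc k) b)\<^sup>2) *
                     (Gamma (Suc k) s $$ (a,b) * cnj (Gamma (Suc k) s $$ (e,b))))"
    using a e by (intro sum.cong refl) (simp add: B_entry power2_eq_square mult_ac)
  finally show ?thesis by simp
qed

(* Site k+1 (tensor Gamma (Suc k)) lies between bonds k and k+1. Everything below is indexed by
   bonds: a weight family w gives the weights w k of bond k, which multiply Gamma (Suc k) from
   the left, as Lam k does in the MPS. *)
locale canonical_mps =
  fixes N :: nat and chi :: "nat \<Rightarrow> nat"
    and Gamma :: "nat \<Rightarrow> nat \<Rightarrow> complex mat" and Lam :: "nat \<Rightarrow> nat \<Rightarrow> real"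
  assumes chi_0: "chi 0 = 1" and chi_N: "chi N = 1"
    and Lam_0: "Lam 0 0 = 1" and Lam_N: "Lam N 0 = 1"
    and Gamma_carrier: "\<And>k s. k < N \<Longrightarrow> s < 2 \<Longrightarrow> Gamma (Suc k) s \<in> carrier_mat (chi k) (chi (Suc k))"
    and left_isometry: "\<And>k b d. k < N \<Longrightarrow> b < chi (Suc k) \<Longrightarrow> d < chi (Suc k) \<Longrightarrow>
      (\<Sum>s<2. \<Sum>a<chi k. complex_of_real ((Lam k a)\<^sup>2) *
         (cnj (Gamma (Suc k) s $$ (a,b)) * Gamma (Suc k) s $$ (a,d))) = (if b = d then 1 else 0)"
    and right_isometry: "\<And>k a e. k < N \<Longrightarrow> a < chi k \<Longrightarrow> e < chi k \<Longrightarrow>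
      (\<Sum>s<2. \<Sum>b<chi (Suc k). complex_of_real ((Lam (Suc k) b)\<^sup>2) *
         (Gamma (Suc k) s $$ (a,b) * cnj (Gamma (Suc k) s $$ (e,b)))) = (if a = e then 1 else 0)"
begin

definition transfer ::
  "(nat \<Rightarrow> real) \<Rightarrow> nat \<Rightarrow> (nat \<Rightarrow> nat \<Rightarrow> complex) \<Rightarrow> nat \<Rightarrow> nat \<Rightarrow> complex" where
  "transfer c k X b d = (\<Sum>s<2. \<Sum>a<chi k. \<Sum>e<chi k.
     cnj (complex_of_real (c a) * Gamma (Suc k) s $$ (a,b)) * X a e *
     (complex_of_real (c e) * Gamma (Suc k) s $$ (e,d)))"

lemma psd_transfer:
  assumes "psd (chi k) X"
  shows "psd (chi (Suc k)) (transfer c k X)"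
  unfolding psd_def
proof
  fix v
  define w where "w s a = (\<Sum>b<chi (Suc k). complex_of_real (c a) * Gamma (Suc k) s $$ (a,b) * v b)" for s a
  have "(\<Sum>b<chi (Suc k). \<Sum>d<chi (Suc k). cnj (v b) * transfer c k X b d * v d)
      = (\<Sum>s<2. \<Sum>a<chi k. \<Sum>e<chi k. \<Sum>b<chi (Suc k). \<Sum>d<chi (Suc k).
           cnj (v b) * (cnj (complex_of_real (c a) * Gamma (Suc k) s $$ (a,b)) * X a e *
           (complex_of_real (c e) * Gamma (Suc k) s $$ (e,d))) * v d)"
    unfolding transfer_def
    by (simp only: sum_distrib_left sum_distrib_right
        sum.swap[of _ "{..<chi (Suc k)}" "{..<2}"] sum.swap[of _ "{..<chi (Suc k)}" "{..<chi k}"])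
  also have "\<dots> = (\<Sum>s<2. \<Sum>a<chi k. \<Sum>e<chi k. cnj (w s a) * X a e * w s e)"
    unfolding w_def
    by (simp only: cnj_sum sum_distrib_left sum_distrib_right complex_cnj_mult mult_ac)
  finally have "(\<Sum>b<chi (Suc k). \<Sum>d<chi (Suc k). cnj (v b) * transfer c k X b d * v d)
      = (\<Sum>s<2. \<Sum>a<chi k. \<Sum>e<chi k. cnj (w s a) * X a e * w s e)" .
  moreover have "0 \<le> Re (\<Sum>a<chi k. \<Sum>e<chi k. cnj (w s a) * X a e * w s e)" for s
    using assms unfolding psd_def by (rule spec)
  ultimately show "0 \<le> Re (\<Sum>b<chi (Suc k). \<Sum>d<chi (Suc k). cnj (v b) * transfer c k X b d * v d)"
    by (simp add: Re_sum sum_nonneg)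
qed

lemma trace_transfer:
  assumes k: "k < N"
  shows "(\<Sum>b<chi (Suc k). complex_of_real ((Lam (Suc k) b)\<^sup>2) * transfer c k X b b)
       = (\<Sum>a<chi k. complex_of_real ((c a)\<^sup>2) * X a a)"
proof -
  have "(\<Sum>b<chi (Suc k). complex_of_real ((Lam (Suc k) b)\<^sup>2) * transfer c k X b b)
      = (\<Sum>a<chi k. \<Sum>e<chi k. complex_of_real (c a) * complex_of_real (c e) * X a e *
          (\<Sum>s<2. \<Sum>b<chi (Suc k). complex_of_real ((Lam (Suc k) b)\<^sup>2) *
             (Gamma (Suc k) s $$ (e,b) * cnj (Gamma (Suc k) s $$ (a,b)))))"
    unfolding transfer_def
    by (simp only: sum_distrib_left sum.swap[of _ "{..<chi (Suc k)}" "{..<2}"]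
        sum.swap[of _ "{..<chi (Suc k)}" "{..<chi k}"] sum.swap[of _ "{..<2}" "{..<chi k}"]
        complex_cnj_mult complex_cnj_complex_of_real mult_ac)
  also have "\<dots> = (\<Sum>a<chi k. \<Sum>e<chi k. complex_of_real (c a) * complex_of_real (c e) * X a e *
                     (if e = a then 1 else 0))"
    using k by (intro sum.cong refl) (simp only: right_isometry lessThan_iff)
  also have "\<dots> = (\<Sum>a<chi k. complex_of_real ((c a)\<^sup>2) * X a a)"
    by (intro sum.cong refl) (simp add: power2_eq_square if_distrib cong: if_cong)
  finally show ?thesis .
qed

lemma transfer_cong:
  assumes "\<And>a e. a < chi k \<Longrightarrow> e < chi k \<Longrightarrow> X a e = Y a e"
  shows "transfer c k X = transfer c k Y"
  unfolding transfer_def using assms by (intro ext sum.cong refl) auto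

lemma transfer_diff: "transfer c k (X - Y) = transfer c k X - transfer c k Y"
  unfolding transfer_def by (intro ext) (simp add: sum_subtractf[symmetric] ring_distribs)

lemma transfer_id:
  "transfer c k (\<lambda>a e. if a = e then 1 else 0) b d =
    (\<Sum>s<2. \<Sum>a<chi k. complex_of_real ((c a)\<^sup>2) *
       (cnj (Gamma (Suc k) s $$ (a,b)) * Gamma (Suc k) s $$ (a,d)))"
  unfolding transfer_def
proof (intro sum.cong refl)
  fix s a assume "a \<in> {..<chi k}"
  have "(\<Sum>e<chi k. cnj (complex_of_real (c a) * Gamma (Suc k) s $$ (a,b)) * (if a = e then 1 else 0) *
          (complex_of_real (c e) * Gamma (Suc k) s $$ (e,d)))
      = (\<Sum>e<chi k. if e = a then complex_of_real ((c a)\<^sup>2) *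
          (cnj (Gamma (Suc k) s $$ (a,b)) * Gamma (Suc k) s $$ (a,d)) else 0)"
    by (intro sum.cong refl) (auto simp: power2_eq_square mult_ac)
  then show "(\<Sum>e<chi k. cnj (complex_of_real (c a) * Gamma (Suc k) s $$ (a,b)) * (if a = e then 1 else 0) *
               (complex_of_real (c e) * Gamma (Suc k) s $$ (e,d)))
      = complex_of_real ((c a)\<^sup>2) * (cnj (Gamma (Suc k) s $$ (a,b)) * Gamma (Suc k) s $$ (a,d))"
    using \<open>a \<in> {..<chi k}\<close> by simp
qed

definition contract ::
  "(nat \<Rightarrow> nat \<Rightarrow> real) \<Rightarrow> nat \<Rightarrow> (nat \<Rightarrow> nat \<Rightarrow> complex) \<Rightarrow> nat \<Rightarrow> nat \<Rightarrow> complex" where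
  "contract w m X = foldl (\<lambda>Y k. transfer (w k) k Y) X [m..<N]"

lemma contract_N: "contract w N X = X"
  unfolding contract_def by simp

lemma contract_step: "m < N \<Longrightarrow> contract w m X = contract w (Suc m) (transfer (w m) m X)"
  unfolding contract_def by (simp add: upt_conv_Cons del: upt_Suc)

lemma contract_diff: "contract w m (X - Y) = contract w m X - contract w m Y"
proof -
  have "foldl (\<lambda>Y k. transfer (w k) k Y) (X - Y) ks =
        foldl (\<lambda>Y k. transfer (w k) k Y) X ks - foldl (\<lambda>Y k. transfer (w k) k Y) Y ks" for ks
    by (induction ks arbitrary: X Y) (simp_all add: transfer_diff)
  then show ?thesis unfolding contract_def .
qed

lemma contract_cong:
  assumes "m \<le> N" "\<And>a e. a < chi m \<Longrightarrow> e < chi m \<Longrightarrow> X a e = Y a e"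
  shows "contract w m X 0 0 = contract w m Y 0 0"
proof (cases "m = N")
  case True
  then show ?thesis using assms(2)[of 0 0] chi_N by (simp add: contract_N)
next
  case False
  then have "m < N" using assms(1) by simp
  moreover have "transfer (w m) m X = transfer (w m) m Y"
    using assms(2) by (rule transfer_cong)
  ultimately show ?thesis by (simp add: contract_step)
qed

lemma contract_weights_cong:
  "(\<And>k. m \<le> k \<Longrightarrow> w k = w' k) \<Longrightarrow> contract w m = contract w' m"
  unfolding contract_def by (intro ext foldl_cong refl) auto

lemma contract_le:
  assumes dominated: "\<And>k a. (w k a)\<^sup>2 \<le> (Lam k a)\<^sup>2"
    and "m \<le> N" "psd (chi m) X"
  shows "Re (contract w m X 0 0) \<le> (\<Sum>a<chi m. (Lam m a)\<^sup>2 * Re (X a a))"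
  using assms(2,3)
proof (induction m arbitrary: X rule: inc_induct)
  case base
  then show ?case using chi_N Lam_N by (simp add: contract_N)
next
  case (step m)
  let ?T = "transfer (w m) m X"
  have "Re (contract w m X 0 0) = Re (contract w (Suc m) ?T 0 0)"
    using step.hyps(2) by (simp add: contract_step)
  also have "\<dots> \<le> (\<Sum>b<chi (Suc m). (Lam (Suc m) b)\<^sup>2 * Re (?T b b))"
    using step.IH psd_transfer step.prems by blast
  also have "\<dots> = Re (\<Sum>b<chi (Suc m). complex_of_real ((Lam (Suc m) b)\<^sup>2) * ?T b b)"
    by (simp add: Re_sum)
  also have "\<dots> = (\<Sum>a<chi m. (w m a)\<^sup>2 * Re (X a a))"
    unfolding trace_transfer[OF step.hyps(2)] by (simp add: Re_sum)
  also have "\<dots> \<le> (\<Sum>a<chi m. (Lam m a)\<^sup>2 * Re (X a a))"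
    using dominated psd_diag_nonneg[OF step.prems] by (intro sum_mono mult_right_mono) auto
  finally show ?case .
qed

primrec partial_amp :: "(nat \<Rightarrow> nat \<Rightarrow> real) \<Rightarrow> nat \<Rightarrow> (nat \<Rightarrow> nat) \<Rightarrow> nat \<Rightarrow> complex" where
  "partial_amp w 0 \<sigma> = (\<lambda>b. 1)"
| "partial_amp w (Suc k) \<sigma> = (\<lambda>b. \<Sum>a<chi k.
     partial_amp w k \<sigma> a * (complex_of_real (w k a) * Gamma (Suc k) (\<sigma> (Suc k)) $$ (a,b)))"

lemma partial_amp_cong_configs:
  "(\<And>i. i \<in> {1..k} \<Longrightarrow> \<sigma> i = \<sigma>' i) \<Longrightarrow> partial_amp w k \<sigma> = partial_amp w k \<sigma>'"
  by (induction k) auto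

definition gram :: "(nat \<Rightarrow> nat \<Rightarrow> real) \<Rightarrow> nat \<Rightarrow> nat \<Rightarrow> nat \<Rightarrow> complex" where
  "gram w k b d = (\<Sum>\<sigma>\<in>configs k. cnj (partial_amp w k \<sigma> b) * partial_amp w k \<sigma> d)"

lemma gram_0: "gram w 0 b d = 1"
  unfolding gram_def configs_0 by simp

lemma gram_Suc: "gram w (Suc k) = transfer (w k) k (gram w k)"
proof (intro ext)
  fix b d
  let ?g = "\<lambda>s a b. complex_of_real (w k a) * Gamma (Suc k) s $$ (a,b)"
  have partial_amp_upd:
    "partial_amp w (Suc k) (\<sigma>(Suc k := s)) b' = (\<Sum>a<chi k. partial_amp w k \<sigma> a * ?g s a b')"
    for \<sigma> s b'
    using partial_amp_cong_configs[of k "\<sigma>(Suc k := s)" \<sigma> w] by simp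
  have "gram w (Suc k) b d = (\<Sum>s<2. \<Sum>\<sigma>\<in>configs k. \<Sum>a<chi k. \<Sum>e<chi k.
          cnj (partial_amp w k \<sigma> a * ?g s a b) * (partial_amp w k \<sigma> e * ?g s e d))"
    unfolding gram_def sum_configs_Suc partial_amp_upd by (simp only: cnj_sum sum_product)
  also have "\<dots> = (\<Sum>s<2. \<Sum>a<chi k. \<Sum>e<chi k. \<Sum>\<sigma>\<in>configs k.
          cnj (?g s a b) * (cnj (partial_amp w k \<sigma> a) * partial_amp w k \<sigma> e) * ?g s e d)"
    by (simp only: sum.swap[of _ "configs k"] complex_cnj_mult mult_ac)
  also have "\<dots> = transfer (w k) k (gram w k) b d"
    unfolding transfer_def gram_def by (simp only: sum_distrib_left sum_distrib_right)
  finally show "gram w (Suc k) b d = transfer (w k) k (gram w k) b d" .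
qed

lemma gram_eq_contract: "k \<le> N \<Longrightarrow> gram w N = contract w k (gram w k)"
proof (induction k rule: inc_induct)
  case base
  then show ?case by (simp add: contract_N)
next
  case (step k)
  then show ?case by (simp add: contract_step gram_Suc)
qed

lemma gram_eq_id:
  assumes "m \<le> N" "\<And>k a. k < m \<Longrightarrow> a < chi k \<Longrightarrow> w k a = Lam k a"
    and "b < chi m" "d < chi m"
  shows "gram w m b d = (if b = d then 1 else 0)"
  using assms
proof (induction m arbitrary: b d)
  case 0
  then show ?case using chi_0 by (simp add: gram_0)
next
  case (Suc m)
  have "gram w (Suc m) b d = transfer (w m) m (\<lambda>a e. if a = e then 1 else 0) b d"
    unfolding gram_Suc using Suc by (subst transfer_cong) auto
  also have "\<dots> = (\<Sum>s<2. \<Sum>a<chi m. complex_of_real ((Lam m a)\<^sup>2) *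
                     (cnj (Gamma (Suc m) s $$ (a,b)) * Gamma (Suc m) s $$ (a,d)))"
    unfolding transfer_id using Suc.prems(2) by (intro sum.cong refl) auto
  also have "\<dots> = (if b = d then 1 else 0)"
    using Suc.prems by (intro left_isometry) auto
  finally show ?case .
qed

definition sq_norm :: "(nat \<Rightarrow> nat \<Rightarrow> real) \<Rightarrow> real" where
  "sq_norm w = Re (gram w N 0 0)"

lemma sq_norm_eq_1: "(\<And>k a. k < N \<Longrightarrow> a < chi k \<Longrightarrow> w k a = Lam k a) \<Longrightarrow> sq_norm w = 1"
  unfolding sq_norm_def using gram_eq_id[of N w 0 0] chi_N by simp

lemma sq_norm_le_1:
  assumes "\<And>k a. (w k a)\<^sup>2 \<le> (Lam k a)\<^sup>2"
  shows "sq_norm w \<le> 1"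
proof -
  have "psd (chi 0) (gram w 0)"
    using psd_id[of 1] chi_0 unfolding psd_def by (simp add: gram_0)
  then have "Re (contract w 0 (gram w 0) 0 0) \<le> (\<Sum>a<chi 0. (Lam 0 a)\<^sup>2 * Re (gram w 0 a a))"
    using contract_le[OF assms] by blast
  then show ?thesis
    unfolding sq_norm_def gram_eq_contract[of 0 w, simplified] using chi_0 Lam_0 by (simp add: gram_0)
qed

definition Lam_cut :: "nat \<Rightarrow> nat \<Rightarrow> nat \<Rightarrow> nat \<Rightarrow> real" where
  "Lam_cut chi' j k a = (if j \<le> k \<and> chi' \<le> a then 0 else Lam k a)"

lemma Lam_cut_sq_le: "(Lam_cut chi' j k a)\<^sup>2 \<le> (Lam k a)\<^sup>2"
  unfolding Lam_cut_def by simp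

lemma sq_norm_Lam_cut_step:
  assumes j: "j < N"
  shows "sq_norm (Lam_cut chi' (Suc j)) - sq_norm (Lam_cut chi' j) \<le> eps_bond chi Lam chi' j"
proof -
  let ?I = "\<lambda>a e. if a = e then (1::complex) else 0"
  define discarded where "discarded a = (if chi' \<le> a then Lam j a else 0)" for a
  have via_bond_j: "sq_norm (Lam_cut chi' j') =
      Re (contract (Lam_cut chi' j) (Suc j) (transfer (Lam_cut chi' j' j) j ?I) 0 0)"
    if "j' = j \<or> j' = Suc j" for j'
  proof -
    have "sq_norm (Lam_cut chi' j') = Re (contract (Lam_cut chi' j') j (gram (Lam_cut chi' j') j) 0 0)"
      unfolding sq_norm_def using gram_eq_contract[of j] j by simp
    also have "contract (Lam_cut chi' j') j (gram (Lam_cut chi' j') j) 0 0 = contract (Lam_cut chi' j') j ?I 0 0"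
      using j that by (intro contract_cong gram_eq_id) (auto simp: Lam_cut_def)
    also have "\<dots> = contract (Lam_cut chi' j') (Suc j) (transfer (Lam_cut chi' j' j) j ?I) 0 0"
      using j by (simp add: contract_step)
    also have "contract (Lam_cut chi' j') (Suc j) = contract (Lam_cut chi' j) (Suc j)"
      using that by (intro contract_weights_cong) (auto simp: Lam_cut_def)
    finally show ?thesis .
  qed
  have split: "transfer (Lam_cut chi' (Suc j) j) j ?I - transfer (Lam_cut chi' j j) j ?I =
      transfer discarded j ?I"
    unfolding fun_diff_def transfer_id sum_subtractf[symmetric]
    by (intro ext sum.cong refl) (simp add: Lam_cut_def discarded_def algebra_simps)
  have "contract (Lam_cut chi' j) (Suc j) (transfer discarded j ?I) 0 0 =
      contract (Lam_cut chi' j) (Suc j) (transfer (Lam_cut chi' (Suc j) j) j ?I) 0 0 -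
      contract (Lam_cut chi' j) (Suc j) (transfer (Lam_cut chi' j j) j ?I) 0 0"
    unfolding split[symmetric] contract_diff by simp
  then have "sq_norm (Lam_cut chi' (Suc j)) - sq_norm (Lam_cut chi' j) =
      Re (contract (Lam_cut chi' j) (Suc j) (transfer discarded j ?I) 0 0)"
    using via_bond_j[of j] via_bond_j[of "Suc j"] by simp
  also have "\<dots> \<le> (\<Sum>b<chi (Suc j). (Lam (Suc j) b)\<^sup>2 * Re (transfer discarded j ?I b b))"
    using j by (intro contract_le Lam_cut_sq_le psd_transfer psd_id) simp
  also have "\<dots> = Re (\<Sum>b<chi (Suc j). complex_of_real ((Lam (Suc j) b)\<^sup>2) * transfer discarded j ?I b b)"
    by (simp add: Re_sum)
  also have "\<dots> = (\<Sum>a<chi j. (discarded a)\<^sup>2)"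
    unfolding trace_transfer[OF j] by (simp add: Re_sum)
  also have "\<dots> = (\<Sum>a\<in>{a\<in>{..<chi j}. chi' \<le> a}. (Lam j a)\<^sup>2)"
    unfolding discarded_def by (subst sum.inter_filter) (auto intro!: sum.cong)
  also have "{a\<in>{..<chi j}. chi' \<le> a} = {chi'..<chi j}"
    by auto
  finally show ?thesis unfolding eps_bond_def .
qed

lemma sq_norm_Lam_cut_ge:
  "k \<le> N \<Longrightarrow> 1 - (\<Sum>j\<in>{k..<N}. eps_bond chi Lam chi' j) \<le> sq_norm (Lam_cut chi' k)"
proof (induction k rule: inc_induct)
  case base
  have "sq_norm (Lam_cut chi' N) = 1"
    by (rule sq_norm_eq_1) (simp add: Lam_cut_def)
  then show ?case by simp
next
  case (step k)
  then show ?case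
    using sq_norm_Lam_cut_step[OF step.hyps(2), of chi'] by (simp add: sum.atLeast_Suc_lessThan)
qed

lemma foldl_mult_eq_partial_amp:
  assumes F_carrier: "\<And>k. k < N \<Longrightarrow> F (Suc k) \<in> carrier_mat (chi k) (chi (Suc k))"
    and F_entry: "\<And>k a b. k < N \<Longrightarrow> a < chi k \<Longrightarrow> b < chi (Suc k) \<Longrightarrow>
      F (Suc k) $$ (a,b) = complex_of_real (w k a) * Gamma (Suc k) (\<sigma> (Suc k)) $$ (a,b)"
    and "m \<le> N"
  shows "foldl (*) (1\<^sub>m 1) (map F [1..<m+1]) \<in> carrier_mat 1 (chi m) \<and>
    (\<forall>b<chi m. foldl (*) (1\<^sub>m 1) (map F [1..<m+1]) $$ (0,b) = partial_amp w m \<sigma> b)"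
  using assms(3)
proof (induction m)
  case 0
  then show ?case using chi_0 by auto
next
  case (Suc m)
  define M where "M = foldl (*) (1\<^sub>m 1) (map F [1..<m+1])"
  have M: "M \<in> carrier_mat 1 (chi m)" "\<And>b. b < chi m \<Longrightarrow> M $$ (0,b) = partial_amp w m \<sigma> b"
    using Suc unfolding M_def by auto
  have m: "m < N" using Suc.prems by simp
  have "(M * F (Suc m)) $$ (0,b) = partial_amp w (Suc m) \<sigma> b" if "b < chi (Suc m)" for b
    using M F_entry[OF m _ that] that
    by (subst index_mult_mat_sum[OF M(1) F_carrier[OF m]]) simp_all
  moreover have "M * F (Suc m) \<in> carrier_mat 1 (chi (Suc m))"
    using M(1) F_carrier[OF m] by simp
  ultimately show ?case unfolding M_def by simp
qed

lemma mtrace_eq_partial_amp: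
  assumes "\<And>k. k < N \<Longrightarrow> F (Suc k) \<in> carrier_mat (chi k) (chi (Suc k))"
    and "\<And>k a b. k < N \<Longrightarrow> a < chi k \<Longrightarrow> b < chi (Suc k) \<Longrightarrow>
      F (Suc k) $$ (a,b) = complex_of_real (w k a) * Gamma (Suc k) (\<sigma> (Suc k)) $$ (a,b)"
  shows "mtrace (foldl (*) (1\<^sub>m 1) (map F [1..<N+1]) * lam_mat chi Lam N) = partial_amp w N \<sigma> 0"
proof -
  have "lam_mat chi Lam N \<in> carrier_mat 1 1" "lam_mat chi Lam N $$ (0,0) = 1"
    using lam_mat_carrier[of chi Lam N] index_lam_mat[of 0 chi N 0 Lam] chi_N Lam_N by auto
  then show ?thesis
    using foldl_mult_eq_partial_amp[OF assms order_refl] chi_N by (simp add: mtrace_mult_1x1)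
qed

lemma sum_sq_eq_sq_norm:
  assumes "\<And>\<sigma>. \<sigma> \<in> configs N \<Longrightarrow> amp \<sigma> = partial_amp w N \<sigma> 0"
  shows "(\<Sum>\<sigma>\<in>configs N. (cmod (amp \<sigma>))\<^sup>2) = sq_norm w"
proof -
  have "Re (cnj z * z) = (cmod z)\<^sup>2" for z
    by (metis Re_complex_of_real complex_norm_square mult.commute)
  then show ?thesis
    unfolding sq_norm_def gram_def using assms by (simp add: Re_sum)
qed

lemma sq_norm_nonneg: "0 \<le> sq_norm w"
proof -
  have "sq_norm w = (\<Sum>\<sigma>\<in>configs N. (cmod (partial_amp w N \<sigma> 0))\<^sup>2)"
    by (rule sum_sq_eq_sq_norm[symmetric]) simp
  then show ?thesis by (simp add: sum_nonneg)
qed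

lemma comp_amp_eq_partial_amp:
  assumes \<sigma>: "\<sigma> \<in> configs N"
  shows "comp_amp N chi Gamma Lam chi' \<sigma> = partial_amp (Lam_cut chi' 1) N \<sigma> 0"
proof -
  define Q where "Q k = (if k = 0 then 1\<^sub>m (chi 0) else proj_mat chi chi' k)" for k
  have Q_carrier: "Q k \<in> carrier_mat (chi k) (chi k)" for k
    unfolding Q_def using proj_mat_carrier[of chi chi' k] by auto
  have QL_carrier: "Q k * lam_mat chi Lam k \<in> carrier_mat (chi k) (chi k)" for k
    using Q_carrier lam_mat_carrier by (metis mult_carrier_mat)
  have QL_entry: "(Q k * lam_mat chi Lam k) $$ (a,a') =
      (if a = a' then complex_of_real (Lam_cut chi' 1 k a) else 0)" if "a < chi k" "a' < chi k" for k a a'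
  proof -
    have "(Q k * lam_mat chi Lam k) $$ (a,a') = Q k $$ (a,a') * complex_of_real (Lam k a')"
      using lam_mat_carrier index_lam_mat Q_carrier that
      by (intro index_mult_diag_mat[where f = "\<lambda>a. complex_of_real (Lam k a)"]) auto
    then show ?thesis
      using that index_proj_mat[of a chi k a' chi'] by (auto simp: Q_def Lam_cut_def)
  qed
  have Gamma: "Gamma (Suc k) (\<sigma> (Suc k)) \<in> carrier_mat (chi k) (chi (Suc k))" if "k < N" for k
    using Gamma_carrier[OF that configs_less_2[OF \<sigma>]] that by simp
  show ?thesis
    unfolding comp_amp_def
  proof (rule mtrace_eq_partial_amp)
    fix k assume k: "k < N"
    have site: "(if Suc k = 1 then 1\<^sub>m (chi 0) else proj_mat chi chi' k) = Q k"
      by (simp add: Q_def)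
    show "(if Suc k = 1 then 1\<^sub>m (chi 0) else proj_mat chi chi' (Suc k - 1)) * lam_mat chi Lam (Suc k - 1) *
        Gamma (Suc k) (\<sigma> (Suc k)) \<in> carrier_mat (chi k) (chi (Suc k))"
      unfolding diff_Suc_1 site by (rule mult_carrier_mat[OF QL_carrier Gamma[OF k]])
    fix a b assume "a < chi k" "b < chi (Suc k)"
    then show "((if Suc k = 1 then 1\<^sub>m (chi 0) else proj_mat chi chi' (Suc k - 1)) * lam_mat chi Lam (Suc k - 1) *
        Gamma (Suc k) (\<sigma> (Suc k))) $$ (a,b) = complex_of_real (Lam_cut chi' 1 k a) * Gamma (Suc k) (\<sigma> (Suc k)) $$ (a,b)"
      unfolding diff_Suc_1 site using QL_carrier QL_entry Gamma[OF k]
      by (intro index_diag_mult_mat[where f = "\<lambda>a. complex_of_real (Lam_cut chi' 1 k a)"]) auto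
  qed
qed

end

lemma canonical_mps_if_vidal:
  assumes "vidal_mps N chi Gamma Lam" "canonical N chi Gamma Lam"
  shows "canonical_mps N chi Gamma Lam"
proof (rule canonical_mps.intro)
  show "chi 0 = 1" "chi N = 1" "Lam 0 0 = 1" "Lam N 0 = 1"
    using assms(1) unfolding vidal_mps_def by auto
qed (fact vidal_mps_Gamma_carrier[OF assms(1)] canonical_left_isometry[OF assms]
      canonical_right_isometry[OF assms])+

theorem lemma2:
  fixes N chi' :: nat and chi :: "nat \<Rightarrow> nat"
    and Gamma :: "nat \<Rightarrow> nat \<Rightarrow> complex mat" and Lam :: "nat \<Rightarrow> nat \<Rightarrow> real"
  assumes "N \<ge> 1"
    and "vidal_mps N chi Gamma Lam"
    and "canonical N chi Gamma Lam"
    and "state_norm N (mps_amp N chi Gamma Lam) = 1"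
    and "(\<forall>i\<le>N. (\<Sum>a<chi i. (Lam i a)\<^sup>2) = 1)"
    and "chi' \<ge> 1"
  shows "1 - sqrt (2 * eps_total N chi Lam chi') \<le> state_norm N (comp_amp N chi Gamma Lam chi')
       \<and> state_norm N (comp_amp N chi Gamma Lam chi') \<le> 1"
proof -
  interpret canonical_mps N chi Gamma Lam
    using assms(2,3) by (rule canonical_mps_if_vidal)
  have "state_norm N (comp_amp N chi Gamma Lam chi') = sqrt (sq_norm (Lam_cut chi' 1))"
    unfolding state_norm_def using comp_amp_eq_partial_amp by (subst sum_sq_eq_sq_norm) auto
  moreover have "1 - eps_total N chi Lam chi' \<le> sq_norm (Lam_cut chi' 1)"
    using sq_norm_Lam_cut_ge[of 1 chi'] assms(1) unfolding eps_total_def by simp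
  ultimately show ?thesis
    using sqrt_bounds_of_square_bounds sq_norm_nonneg sq_norm_le_1[OF Lam_cut_sq_le] by simp
qed

end
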